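(* Let $\mathcal{E},\mathcal{F},\mathcal{G}\in\mathbb{R}[[u,v]]$ be formal power series of the normalized form given in the context (with constants $a_{2,0},a_{1,1}\in\mathbb{R}$, $a_{0,2}>0$), and fix real numbers $b_3,b_4,\dots$. Then for each integer $m\ge2$ there exists a unique $m$-th formal solution $(\mathcal{X}_{m+1},\mathcal{Y}_{m-1},\mathcal{Z}_m)$.
   Context: For $P\in\mathbb{R}[[u,v]]$ write $P=\sum_{k,l\ge0}\frac{P(k,l)}{k!\,l!}u^kv^l$; $P$ has order at least $n$ if $P(k,l)=0$ for $k+l<n$, and $\mathcal{O}_n$ denotes the ideal of such series. The normalized form: $\mathcal{E}=1+a_{2,0}^2u^2+2a_{2,0}a_{1,1}uv+(1+a_{1,1}^2)v^2+\mathcal{O}_3$, $\mathcal{F}=a_{2,0}a_{1,1}u^2+(a_{2,0}a_{0,2}+a_{1,1}^2+1)uv+a_{1,1}a_{0,2}v^2+\mathcal{O}_3$, $\mathcal{G}=(1+a_{1,1}^2)u^2+2a_{1,1}a_{0,2}uv+a_{0,2}^2v^2+\mathcal{O}_3$. For $m\ge2$, an $m$-th formal solution is a triple of polynomials $\mathcal{X}_{m+1}=u+\sum_{2\le k+l\le m+1}\frac{X(k,l)}{k!l!}u^kv^l$, $\mathcal{Y}_{m-1}=\sum_{1\le k+l\le m-1}\frac{Y(k,l)}{k!l!}u^kv^l$, $\mathcal{Z}_m=\sum_{2\le k+l\le m}\frac{Z(k,l)}{k!l!}u^kv^l$ with real coefficients, such that $Y(0,1)>0$, $Z(0,2)>0$,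 and, setting $\beta_{m+1}(t)=\sum_{j=3}^{m+1}\frac{b_j}{j!}t^j$ and $f^m=(\mathcal{X}_{m+1},\;\mathcal{X}_{m+1}\mathcal{Y}_{m-1}+\beta_{m+1}(\mathcal{Y}_{m-1}),\;\mathcal{Z}_m)$ (a triple of polynomials in $u,v$), $\mathcal{E}-f^m_u\cdot f^m_u\in\mathcal{O}_{m+1}$, $\mathcal{F}-f^m_u\cdot f^m_v\in\mathcal{O}_{m+1}$, $\mathcal{G}-f^m_v\cdot f^m_v\in\mathcal{O}_{m+1}$, where $\cdot$ is the Euclidean inner product and subscripts denote partial derivatives. *)

theory Defs
  imports Complex_Main
begin

text \<open>A formal power series P in R[[u,v]] is represented by its paper-convention
coefficients P(k,l), i.e. P = sum_{k,l} P(k,l)/(k! l!) u^k v^l.\<close>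

type_synonym fps2 = "nat \<Rightarrow> nat \<Rightarrow> real"

definition fps2_const :: "real \<Rightarrow> fps2" where
  "fps2_const c = (\<lambda>k l. if k = 0 \<and> l = 0 then c else 0)"

definition fps2_monom :: "nat \<Rightarrow> nat \<Rightarrow> fps2" where
  "fps2_monom a b = (\<lambda>k l. if k = a \<and> l = b then fact a * fact b else 0)"

definition fps2_add :: "fps2 \<Rightarrow> fps2 \<Rightarrow> fps2" where
  "fps2_add P Q = (\<lambda>k l. P k l + Q k l)"

definition fps2_diff :: "fps2 \<Rightarrow> fps2 \<Rightarrow> fps2" where
  "fps2_diff P Q = (\<lambda>k l. P k l - Q k l)"

definition fps2_scale :: "real \<Rightarrow> fps2 \<Rightarrow> fps2" where
  "fps2_scale c P = (\<lambda>k l. c * P k l)"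

text \<open>Product (Leibniz rule in the factorial-normalised coefficients).\<close>
definition fps2_mult :: "fps2 \<Rightarrow> fps2 \<Rightarrow> fps2" where
  "fps2_mult P Q = (\<lambda>k l. \<Sum>i\<le>k. \<Sum>j\<le>l.
      of_nat (k choose i) * of_nat (l choose j) * P i j * Q (k - i) (l - j))"

primrec fps2_pow :: "fps2 \<Rightarrow> nat \<Rightarrow> fps2" where
  "fps2_pow P 0 = fps2_const 1"
| "fps2_pow P (Suc n) = fps2_mult P (fps2_pow P n)"

definition fps2_du :: "fps2 \<Rightarrow> fps2" where
  "fps2_du P = (\<lambda>k l. P (Suc k) l)"

definition fps2_dv :: "fps2 \<Rightarrow> fps2" where
  "fps2_dv P = (\<lambda>k l. P k (Suc l))"

definition fps2_order_ge :: "nat \<Rightarrow> fps2 \<Rightarrow> bool" where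
  "fps2_order_ge n P \<longleftrightarrow> (\<forall>k l. k + l < n \<longrightarrow> P k l = 0)"

definition fps2_dot :: "fps2 \<times> fps2 \<times> fps2 \<Rightarrow> fps2 \<times> fps2 \<times> fps2 \<Rightarrow> fps2" where
  "fps2_dot p q = (case p of (p1, p2, p3) \<Rightarrow> case q of (q1, q2, q3) \<Rightarrow>
      fps2_add (fps2_add (fps2_mult p1 q1) (fps2_mult p2 q2)) (fps2_mult p3 q3))"

definition normalized_EFG :: "real \<Rightarrow> real \<Rightarrow> real \<Rightarrow> fps2 \<Rightarrow> fps2 \<Rightarrow> fps2 \<Rightarrow> bool" where
  "normalized_EFG a20 a11 a02 E F G \<longleftrightarrow>
     fps2_order_ge 3 (fps2_diff E
        (fps2_add (fps2_add (fps2_add (fps2_const 1)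
           (fps2_scale (a20^2) (fps2_monom 2 0)))
           (fps2_scale (2 * a20 * a11) (fps2_monom 1 1)))
           (fps2_scale (1 + a11^2) (fps2_monom 0 2)))) \<and>
     fps2_order_ge 3 (fps2_diff F
        (fps2_add (fps2_add
           (fps2_scale (a20 * a11) (fps2_monom 2 0))
           (fps2_scale (a20 * a02 + a11^2 + 1) (fps2_monom 1 1)))
           (fps2_scale (a11 * a02) (fps2_monom 0 2)))) \<and>
     fps2_order_ge 3 (fps2_diff G
        (fps2_add (fps2_add
           (fps2_scale (1 + a11^2) (fps2_monom 2 0))
           (fps2_scale (2 * a11 * a02) (fps2_monom 1 1)))
           (fps2_scale (a02^2) (fps2_monom 0 2))))"

definition beta_comp :: "(nat \<Rightarrow> real) \<Rightarrow> nat \<Rightarrow> fps2 \<Rightarrow> fps2" where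
  "beta_comp b m Y = (\<lambda>k l. \<Sum>j\<in>{3..m+1}. b j / fact j * fps2_pow Y j k l)"

definition formal_solution ::
  "fps2 \<Rightarrow> fps2 \<Rightarrow> fps2 \<Rightarrow> (nat \<Rightarrow> real) \<Rightarrow> nat \<Rightarrow> fps2 \<Rightarrow> fps2 \<Rightarrow> fps2 \<Rightarrow> bool" where
  "formal_solution E F G b m X Y Z \<longleftrightarrow>
     (\<forall>k l. (k + l < 2 \<or> m + 1 < k + l) \<longrightarrow> X k l = (if k = 1 \<and> l = 0 then 1 else 0)) \<and>
     (\<forall>k l. (k + l < 1 \<or> m - 1 < k + l) \<longrightarrow> Y k l = 0) \<and>
     (\<forall>k l. (k + l < 2 \<or> m < k + l) \<longrightarrow> Z k l = 0) \<and>
     Y 0 1 > 0 \<and> Z 0 2 > 0 \<and>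
     (let f = (X, fps2_add (fps2_mult X Y) (beta_comp b m Y), Z);
          fu = (case f of (f1, f2, f3) \<Rightarrow> (fps2_du f1, fps2_du f2, fps2_du f3));
          fv = (case f of (f1, f2, f3) \<Rightarrow> (fps2_dv f1, fps2_dv f2, fps2_dv f3))
      in fps2_order_ge (m + 1) (fps2_diff E (fps2_dot fu fu)) \<and>
         fps2_order_ge (m + 1) (fps2_diff F (fps2_dot fu fv)) \<and>
         fps2_order_ge (m + 1) (fps2_diff G (fps2_dot fv fv)))"

end

theory Submission
  imports Defs "HOL-Computational_Algebra.Formal_Power_Series" "HOL-Library.Product_Plus"
begin

unbundle fps_syntax

text \<open>Moved to \<real>[[u]][[v]] (coefficients P(k,l) / (k! l!)), the normal form of E, F, G is
  exactly the first fundamental form of the quadric f0 = (u, uv, (a20 u^2 + 2 a11 uv + a02 v^2) / 2).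
  Correcting a solution of order n by terms of degree n + 2, n and n + 1 in X, Y and Z changes
  its defect in degree n + 1 only through the derivative of the first form at f0. The coefficient
  equations of that linear map become triangular once the X-coefficients are eliminated, with
  pivots a02 (n - l) (n + l - 1) \<noteq> 0, so the terms of each degree exist and are unique.
  In degree two the equations are quadratic, and the signs of Y(0,1) and Z(0,2) single out
  the quadric itself.\<close>

section \<open>Bivariate formal power series\<close>

type_synonym bfps = "real fps fps"

definition bconst :: "real \<Rightarrow> bfps" where
  "bconst c = fps_const (fps_const c)"

definition U :: bfps where "U = fps_X"
definition V :: bfps where "V = fps_const fps_X"

abbreviation Du :: "bfps \<Rightarrow> bfps" where "Du \<equiv> fps_deriv"

definition Dv :: "bfps \<Rightarrow> bfps" where
  "Dv F = Abs_fps (\<lambda>k. fps_deriv (F $ k))"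

lemma bconst_nth [simp]: "bconst c $ k $ l = (if k = 0 \<and> l = 0 then c else 0)"
  by (simp add: bconst_def)

lemma bconst_mult_nth [simp]: "(bconst c * F) $ k $ l = c * F $ k $ l"
  by (simp add: bconst_def)

lemma bconst_mult [simp]: "bconst a * bconst b = bconst (a * b)"
  by (simp add: bconst_def)

lemma bconst_add: "bconst a + bconst b = bconst (a + b)"
  by (simp add: bconst_def)

lemma bconst_one [simp]: "bconst 1 = 1"
  by (simp add: bconst_def)

lemma bconst_numeral: "bconst (numeral w) = numeral w"
  by (simp add: bconst_def numeral_fps_const)

lemma numeral_mult_nth [simp]: "((numeral w :: bfps) * F) $ k $ l = numeral w * F $ k $ l"
  by (simp flip: bconst_numeral)

lemma of_nat_mult_fps_nth [simp]: "(of_nat c * (f :: real fps)) $ l = of_nat c * f $ l"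
  by (simp flip: fps_of_nat)

lemma U_nth [simp]: "U $ k $ l = (if k = 1 \<and> l = 0 then 1 else 0)"
  by (simp add: U_def)

lemma V_nth [simp]: "V $ k $ l = (if k = 0 \<and> l = 1 then 1 else 0)"
  by (simp add: V_def)

lemma U_mult_nth: "(U * F) $ k $ l = (if k = 0 then 0 else F $ (k - 1) $ l)"
  by (cases k) (simp_all add: U_def)

lemma V_mult_nth: "(V * F) $ k $ l = (if l = 0 then 0 else F $ k $ (l - 1))"
  by (cases l) (simp_all add: V_def)

lemma Du_nth [simp]: "Du F $ k $ l = of_nat (k + 1) * F $ (k + 1) $ l"
  by (simp del: of_nat_Suc of_nat_add)

lemma Dv_nth [simp]: "Dv F $ k $ l = of_nat (l + 1) * F $ k $ (l + 1)"
  by (simp add: Dv_def)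

lemma Dv_nth_row: "Dv F $ k = fps_deriv (F $ k)"
  by (simp add: Dv_def)

lemma Dv_add [simp]: "Dv (F + G) = Dv F + Dv G"
  by (intro fps_ext) (simp add: Dv_nth_row)

lemma Dv_diff [simp]: "Dv (F - G) = Dv F - Dv G"
  by (intro fps_ext) (simp add: Dv_nth_row)

lemma Dv_mult [simp]: "Dv (F * G) = Dv F * G + F * Dv G"
  by (rule fps_ext) (simp add: Dv_nth_row fps_mult_nth fps_deriv_sum sum.distrib)

lemma Dv_bconst [simp]: "Dv (bconst c) = 0"
  by (intro fps_ext) (simp add: Dv_nth_row bconst_def)

lemma Dv_zero [simp]: "Dv 0 = 0"
  by (intro fps_ext) (simp add: Dv_nth_row)

lemma Du_bconst [simp]: "Du (bconst c) = 0"
  by (simp add: bconst_def)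

lemma Du_U [simp]: "Du U = 1" by (simp add: U_def)
lemma Du_V [simp]: "Du V = 0" by (simp add: V_def)
lemma Dv_U [simp]: "Dv U = 0" by (intro fps_ext) (simp add: Dv_nth_row U_def)
lemma Dv_V [simp]: "Dv V = 1" by (intro fps_ext) (simp add: Dv_nth_row V_def)

definition in_O :: "nat \<Rightarrow> bfps \<Rightarrow> bool" where
  "in_O n F \<longleftrightarrow> (\<forall>k l. k + l < n \<longrightarrow> F $ k $ l = 0)"

definition deg_le :: "nat \<Rightarrow> bfps \<Rightarrow> bool" where
  "deg_le d F \<longleftrightarrow> (\<forall>k l. d < k + l \<longrightarrow> F $ k $ l = 0)"

lemma in_O_0 [simp]: "in_O 0 F" by (simp add: in_O_def)
lemma in_O_zero [simp]: "in_O n 0" by (simp add: in_O_def)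
lemma in_O_U [simp]: "in_O 1 U" by (simp add: in_O_def)
lemma in_O_V [simp]: "in_O 1 V" by (simp add: in_O_def)

lemma in_O_mono: "in_O n F \<Longrightarrow> m \<le> n \<Longrightarrow> in_O m F"
  by (simp add: in_O_def)

lemma in_O_add: "in_O n F \<Longrightarrow> in_O n G \<Longrightarrow> in_O n (F + G)"
  by (simp add: in_O_def)

lemma in_O_diff: "in_O n F \<Longrightarrow> in_O n G \<Longrightarrow> in_O n (F - G)"
  by (simp add: in_O_def)

lemma in_O_bconst_mult: "in_O n F \<Longrightarrow> in_O n (bconst c * F)"
  by (simp add: in_O_def)

lemma in_O_numeral_mult: "in_O n F \<Longrightarrow> in_O n (numeral w * F)"
  by (simp add: in_O_def)

lemma in_O_Du: "in_O (Suc n) F \<Longrightarrow> in_O n (Du F)"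
  by (simp add: in_O_def del: of_nat_Suc of_nat_add)

lemma in_O_Dv: "in_O (Suc n) F \<Longrightarrow> in_O n (Dv F)"
  by (simp add: in_O_def del: of_nat_Suc of_nat_add)

lemma in_O_mult: "in_O a F \<Longrightarrow> in_O b G \<Longrightarrow> in_O (a + b) (F * G)"
  unfolding in_O_def fps_mult_nth fps_sum_nth
proof (intro allI impI sum.neutral ballI)
  fix k l i j
  assume F: "\<forall>k l. k + l < a \<longrightarrow> F $ k $ l = 0" and G: "\<forall>k l. k + l < b \<longrightarrow> G $ k $ l = 0"
    and kl: "k + l < a + b" and i: "i \<in> {0..k}" and j: "j \<in> {0..l}"
  show "F $ i $ j * G $ (k - i) $ (l - j) = 0"
  proof (cases "i + j < a")
    case False
    then have "k - i + (l - j) < b" using kl i j by auto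
    then show ?thesis using G by simp
  qed (use F in simp)
qed

lemma in_O_mult_mono: "in_O a F \<Longrightarrow> in_O b G \<Longrightarrow> c \<le> a + b \<Longrightarrow> in_O c (F * G)"
  using in_O_mult in_O_mono by blast

lemma in_O_power: "in_O a F \<Longrightarrow> in_O (a * j) (F ^ j)"
  by (induction j) (simp_all add: in_O_mult)

lemma in_O_sum: "(\<And>j. j \<in> J \<Longrightarrow> in_O n (f j)) \<Longrightarrow> in_O n (sum f J)"
  by (induction J rule: infinite_finite_induct) (simp_all add: in_O_add)

lemma in_O_Suc_iff: "in_O (Suc n) F \<longleftrightarrow> in_O n F \<and> (\<forall>l\<le>n. F $ (n - l) $ l = 0)"
proof
  assume "in_O n F \<and> (\<forall>l\<le>n. F $ (n - l) $ l = 0)"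
  then show "in_O (Suc n) F"
    unfolding in_O_def by (metis add_diff_cancel_right' le_add2 less_Suc_eq)
qed (auto simp: in_O_def)

lemma power_diff_in_O:
  assumes "in_O 1 Y" "in_O 1 Y'" "in_O a (Y' - Y)" "1 \<le> j"
  shows "in_O (a + j - 1) (Y' ^ j - Y ^ j)"
  using assms(4)
proof (induction j rule: dec_induct)
  case (step j)
  have "Y' ^ Suc j - Y ^ Suc j = Y' * (Y' ^ j - Y ^ j) + (Y' - Y) * Y ^ j"
    by (simp add: algebra_simps)
  moreover have "in_O (a + Suc j - 1) (Y' * (Y' ^ j - Y ^ j))"
    using in_O_mult[OF assms(2) step.IH] step.hyps by simp
  moreover have "in_O (a + Suc j - 1) ((Y' - Y) * Y ^ j)"
    using in_O_mult[OF assms(3) in_O_power[OF assms(1)]] by simp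
  ultimately show ?case by (simp add: in_O_add)
qed (use assms in simp)

lemma deg_le_add: "deg_le d F \<Longrightarrow> deg_le d G \<Longrightarrow> deg_le d (F + G)"
  by (simp add: deg_le_def)

lemma deg_le_diff: "deg_le d F \<Longrightarrow> deg_le d G \<Longrightarrow> deg_le d (F - G)"
  by (simp add: deg_le_def)

lemma deg_le_mono: "deg_le d F \<Longrightarrow> d \<le> e \<Longrightarrow> deg_le e F"
  by (simp add: deg_le_def)

lemma in_O_deg_le_zero: "in_O (Suc d) F \<Longrightarrow> deg_le d F \<Longrightarrow> F = 0"
  unfolding in_O_def deg_le_def
  by (intro fps_ext) (metis fps_zero_nth linorder_not_less less_Suc_eq_le)

type_synonym bfps3 = "bfps \<times> bfps \<times> bfps"

definition in_O3 :: "nat \<Rightarrow> bfps3 \<Rightarrow> bool" where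
  "in_O3 n p \<longleftrightarrow> in_O n (fst p) \<and> in_O n (fst (snd p)) \<and> in_O n (snd (snd p))"

definition Du3 :: "bfps3 \<Rightarrow> bfps3" where
  "Du3 p = (Du (fst p), Du (fst (snd p)), Du (snd (snd p)))"

definition Dv3 :: "bfps3 \<Rightarrow> bfps3" where
  "Dv3 p = (Dv (fst p), Dv (fst (snd p)), Dv (snd (snd p)))"

definition dot3 :: "bfps3 \<Rightarrow> bfps3 \<Rightarrow> bfps" where
  "dot3 p q = fst p * fst q + fst (snd p) * fst (snd q) + snd (snd p) * snd (snd q)"

definition first_form :: "bfps3 \<Rightarrow> bfps3" where
  "first_form f = (dot3 (Du3 f) (Du3 f), dot3 (Du3 f) (Dv3 f), dot3 (Dv3 f) (Dv3 f))"

definition first_form_deriv :: "bfps3 \<Rightarrow> bfps3 \<Rightarrow> bfps3" where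
  "first_form_deriv f g =
     (2 * dot3 (Du3 f) (Du3 g), dot3 (Du3 f) (Dv3 g) + dot3 (Dv3 f) (Du3 g), 2 * dot3 (Dv3 f) (Dv3 g))"

lemma in_O3_Pair [simp]: "in_O3 n (a, b, c) \<longleftrightarrow> in_O n a \<and> in_O n b \<and> in_O n c"
  by (simp add: in_O3_def)

lemma Du3_Pair [simp]: "Du3 (a, b, c) = (Du a, Du b, Du c)"
  by (simp add: Du3_def)

lemma Dv3_Pair [simp]: "Dv3 (a, b, c) = (Dv a, Dv b, Dv c)"
  by (simp add: Dv3_def)

lemma dot3_Pair [simp]: "dot3 (a1, a2, a3) (b1, b2, b3) = a1 * b1 + a2 * b2 + a3 * b3"
  by (simp add: dot3_def)

lemma in_O3_zero [simp]: "in_O3 n 0"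
  by (simp add: in_O3_def)

lemma in_O3_add: "in_O3 n p \<Longrightarrow> in_O3 n q \<Longrightarrow> in_O3 n (p + q)"
  by (simp add: in_O3_def in_O_add)

lemma in_O3_diff: "in_O3 n p \<Longrightarrow> in_O3 n q \<Longrightarrow> in_O3 n (p - q)"
  by (simp add: in_O3_def in_O_diff)

lemma in_O3_mono: "in_O3 n p \<Longrightarrow> m \<le> n \<Longrightarrow> in_O3 m p"
  by (auto simp: in_O3_def intro: in_O_mono)

lemma in_O3_Du3: "in_O3 (Suc n) p \<Longrightarrow> in_O3 n (Du3 p)"
  by (simp add: in_O3_def Du3_def in_O_Du)

lemma in_O3_Dv3: "in_O3 (Suc n) p \<Longrightarrow> in_O3 n (Dv3 p)"
  by (simp add: in_O3_def Dv3_def in_O_Dv)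

lemma in_O_dot3: "in_O3 a p \<Longrightarrow> in_O3 b q \<Longrightarrow> in_O (a + b) (dot3 p q)"
  by (simp add: in_O3_def dot3_def in_O_add in_O_mult)

lemma Du3_diff: "Du3 (p - q) = Du3 p - Du3 q"
  by (simp add: Du3_def)

lemma Dv3_diff: "Dv3 (p - q) = Dv3 p - Dv3 q"
  by (simp add: Dv3_def)

lemma dot3_diff_left: "dot3 (p - q) r = dot3 p r - dot3 q r"
  by (simp add: dot3_def algebra_simps)

lemma first_form_add:
  "first_form (f + g) = first_form f + first_form_deriv f g + first_form g"
  by (simp add: first_form_def first_form_deriv_def Du3_def Dv3_def dot3_def algebra_simps)

lemma first_form_deriv_diff_left:
  "first_form_deriv (f - f') g = first_form_deriv f g - first_form_deriv f' g"
  by (simp add: first_form_deriv_def Du3_diff Dv3_diff dot3_diff_left algebra_simps)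

lemma in_O3_first_form_deriv:
  assumes "in_O3 (Suc a) f" "in_O3 (Suc b) g"
  shows "in_O3 (a + b) (first_form_deriv f g)"
proof -
  have "in_O (a + b) (dot3 (D f) (D' g))"
    if "D \<in> {Du3, Dv3}" "D' \<in> {Du3, Dv3}" for D D'
    using that in_O_dot3[OF in_O3_Du3[OF assms(1)] in_O3_Du3[OF assms(2)]]
      in_O_dot3[OF in_O3_Du3[OF assms(1)] in_O3_Dv3[OF assms(2)]]
      in_O_dot3[OF in_O3_Dv3[OF assms(1)] in_O3_Du3[OF assms(2)]]
      in_O_dot3[OF in_O3_Dv3[OF assms(1)] in_O3_Dv3[OF assms(2)]] by auto
  then show ?thesis
    by (simp add: first_form_deriv_def in_O3_def in_O_add in_O_numeral_mult)
qed

lemma in_O3_first_form: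
  assumes "in_O3 (Suc a) f"
  shows "in_O3 (a + a) (first_form f)"
  using in_O_dot3[OF in_O3_Du3[OF assms] in_O3_Du3[OF assms]]
    in_O_dot3[OF in_O3_Du3[OF assms] in_O3_Dv3[OF assms]]
    in_O_dot3[OF in_O3_Dv3[OF assms] in_O3_Dv3[OF assms]]
  by (simp add: first_form_def)

definition beta :: "(nat \<Rightarrow> real) \<Rightarrow> nat \<Rightarrow> bfps \<Rightarrow> bfps" where
  "beta b m Y = (\<Sum>j\<in>{3..m+1}. bconst (b j / fact j) * Y ^ j)"

definition immersion :: "(nat \<Rightarrow> real) \<Rightarrow> nat \<Rightarrow> bfps \<Rightarrow> bfps \<Rightarrow> bfps \<Rightarrow> bfps3" where
  "immersion b m X Y Z = (X, X * Y + beta b m Y, Z)"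

definition Z2 :: "real \<Rightarrow> real \<Rightarrow> real \<Rightarrow> bfps" where
  "Z2 a20 a11 a02 = bconst (a20 / 2) * (U * U) + bconst a11 * (U * V) + bconst (a02 / 2) * (V * V)"

definition quadric :: "real \<Rightarrow> real \<Rightarrow> real \<Rightarrow> bfps3" where
  "quadric a20 a11 a02 = (U, U * V, Z2 a20 a11 a02)"

definition linearized_first_form :: "real \<Rightarrow> real \<Rightarrow> real \<Rightarrow> bfps \<Rightarrow> bfps \<Rightarrow> bfps \<Rightarrow> bfps3" where
  "linearized_first_form a20 a11 a02 \<xi> \<eta> \<zeta> = first_form_deriv (quadric a20 a11 a02) (\<xi>, U * \<eta>, \<zeta>)"

lemma in_O_beta: "in_O 1 Y \<Longrightarrow> in_O 3 (beta b m Y)"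
  unfolding beta_def
  by (intro in_O_sum in_O_bconst_mult, rule in_O_mono[OF in_O_power[of 1 Y]]) auto

lemma beta_diff_in_O:
  assumes "in_O 1 Y" "in_O 1 Y'" "in_O a (Y' - Y)" "2 \<le> a"
  shows "in_O (a + 2) (beta b m Y' - beta b m Y)"
proof -
  have eq: "beta b m Y' - beta b m Y = (\<Sum>j\<in>{3..m+1}. bconst (b j / fact j) * (Y' ^ j - Y ^ j))"
    unfolding beta_def by (simp add: sum_subtractf right_diff_distrib)
  show ?thesis unfolding eq
    by (intro in_O_sum in_O_bconst_mult, rule in_O_mono[OF power_diff_in_O[OF assms(1-3)]])
      (use assms(4) in auto)
qed

lemma UU_nth [simp]: "(U * U) $ k $ l = (if k = 2 \<and> l = 0 then 1 else 0)"
  by (simp add: U_mult_nth) (auto simp: numeral_2_eq_2)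

lemma UV_nth [simp]: "(U * V) $ k $ l = (if k = 1 \<and> l = 1 then 1 else 0)"
  by (simp add: U_mult_nth)

lemma VV_nth [simp]: "(V * V) $ k $ l = (if k = 0 \<and> l = 2 then 1 else 0)"
  by (simp add: V_mult_nth) (auto simp: numeral_2_eq_2)

lemma Z2_nth: "Z2 a20 a11 a02 $ k $ l =
  (if k = 2 \<and> l = 0 then a20 / 2 else if k = 1 \<and> l = 1 then a11 else if k = 0 \<and> l = 2 then a02 / 2 else 0)"
  by (simp add: Z2_def)

lemma in_O_Z2 [simp]: "in_O 2 (Z2 a20 a11 a02)"
  by (simp add: in_O_def Z2_nth)

lemma bconst_two: "2 * bconst (a / 2) = bconst a"
  by (simp add: mult_2 bconst_add)

lemma Du_Z2: "Du (Z2 a20 a11 a02) = bconst a20 * U + bconst a11 * V"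
proof -
  have "Du (Z2 a20 a11 a02) = 2 * bconst (a20 / 2) * U + bconst a11 * V"
    by (simp add: Z2_def algebra_simps)
  then show ?thesis by (simp only: bconst_two)
qed

lemma Dv_Z2: "Dv (Z2 a20 a11 a02) = bconst a11 * U + bconst a02 * V"
proof -
  have "Dv (Z2 a20 a11 a02) = bconst a11 * U + 2 * bconst (a02 / 2) * V"
    by (simp add: Z2_def algebra_simps)
  then show ?thesis by (simp only: bconst_two)
qed

lemma immersion_near_quadric:
  assumes "in_O 3 (X - U)" "in_O 2 (Y - V)" "in_O 3 (Z - Z2 a20 a11 a02)"
  shows "in_O3 3 (immersion b m X Y Z - quadric a20 a11 a02)"
proof -
  have Y: "in_O 1 Y"
    using in_O_add[OF in_O_mono[OF assms(2)] in_O_V] by simp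
  have "immersion b m X Y Z - quadric a20 a11 a02 =
      (X - U, (X - U) * Y + U * (Y - V) + beta b m Y, Z - Z2 a20 a11 a02)"
    by (simp add: immersion_def quadric_def algebra_simps)
  moreover have "in_O 3 ((X - U) * Y + U * (Y - V) + beta b m Y)"
    by (intro in_O_add in_O_mult_mono[OF assms(1) Y] in_O_mult_mono[OF in_O_U assms(2)]
        in_O_beta[OF Y]) simp_all
  ultimately show ?thesis
    using assms by simp
qed

text \<open>Since the middle component starts at order two, changing it by a term of order n + 1
  changes the first form only in order n + 1, not merely in order n.\<close>

lemma first_form_middle_perturb:
  assumes W: "in_O 2 W" and rho: "in_O (Suc n) \<rho>" and n: "1 \<le> n"
  shows "in_O3 (Suc n) (first_form (X, W + \<rho>, Z) - first_form (X, W, Z))"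
proof -
  have "(X, W + \<rho>, Z) = (X, W, Z) + (0, \<rho>, 0)" by simp
  then have eq: "first_form (X, W + \<rho>, Z) - first_form (X, W, Z) =
      first_form_deriv (X, W, Z) (0, \<rho>, 0) + first_form (0, \<rho>, 0)"
    by (simp only: first_form_add) simp
  have Wu: "in_O 1 (Du W)" and Wv: "in_O 1 (Dv W)"
    using in_O_Du[of 1 W] in_O_Dv[of 1 W] W by (simp_all add: numeral_2_eq_2)
  have "in_O3 (Suc n) (first_form_deriv (X, W, Z) (0, \<rho>, 0))"
    using in_O_mult[OF Wu in_O_Du[OF rho]] in_O_mult[OF Wu in_O_Dv[OF rho]]
      in_O_mult[OF Wv in_O_Du[OF rho]] in_O_mult[OF Wv in_O_Dv[OF rho]]
    by (simp add: first_form_deriv_def in_O_add in_O_numeral_mult)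
  moreover have "in_O3 (Suc n) (first_form (0, \<rho>, 0))"
    by (rule in_O3_mono[OF in_O3_first_form]) (use rho n in auto)
  ultimately show ?thesis
    unfolding eq by (rule in_O3_add)
qed

lemma first_form_perturb:
  assumes f: "in_O3 3 (f - f0)" and \<delta>: "in_O3 n \<delta>" and n: "3 \<le> n"
  shows "in_O3 (n + 1) (first_form (f + \<delta>) - first_form f - first_form_deriv f0 \<delta>)"
proof -
  have \<delta>': "in_O3 (Suc (n - 1)) \<delta>" using \<delta> n by simp
  have "first_form (f + \<delta>) - first_form f - first_form_deriv f0 \<delta> =
      first_form_deriv (f - f0) \<delta> + first_form \<delta>"
    by (simp add: first_form_add first_form_deriv_diff_left)
  moreover have "in_O3 (2 + (n - 1)) (first_form_deriv (f - f0) \<delta>)"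
    by (rule in_O3_first_form_deriv[OF _ \<delta>']) (use f in \<open>simp add: numeral_3_eq_3\<close>)
  moreover have "in_O3 ((n - 1) + (n - 1)) (first_form \<delta>)"
    by (rule in_O3_first_form[OF \<delta>'])
  moreover have "2 + (n - 1) = n + 1" "n + 1 \<le> (n - 1) + (n - 1)" using n by auto
  ultimately show ?thesis by (metis in_O3_add in_O3_mono order_refl)
qed

lemma first_form_immersion_step:
  assumes X: "in_O 3 (X - U)" and Y: "in_O 2 (Y - V)" and Z: "in_O 3 (Z - Z2 a20 a11 a02)"
    and \<xi>: "in_O (n + 1) \<xi>" and \<eta>: "in_O (n - 1) \<eta>" and \<zeta>: "in_O n \<zeta>" and n: "3 \<le> n"
  shows "in_O3 (n + 1) (first_form (immersion b m (X + \<xi>) (Y + \<eta>) (Z + \<zeta>))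
    - first_form (immersion b m X Y Z) - linearized_first_form a20 a11 a02 \<xi> \<eta> \<zeta>)"
proof -
  define W where "W = X * Y + beta b m Y + U * \<eta>"
  define \<rho> where "\<rho> = \<xi> * Y + (X - U) * \<eta> + \<xi> * \<eta> + (beta b m (Y + \<eta>) - beta b m Y)"
  have Y1: "in_O 1 Y" using in_O_add[OF in_O_mono[OF Y] in_O_V] by simp
  have X1: "in_O 1 X" using in_O_add[OF in_O_mono[OF X] in_O_U] by simp
  have \<eta>1: "in_O 1 \<eta>" using in_O_mono[OF \<eta>] n by simp
  have W: "in_O 2 W"
    unfolding W_def using in_O_mult_mono[OF in_O_U \<eta>] n
    by (intro in_O_add in_O_mult_mono[OF X1 Y1] in_O_mono[OF in_O_beta[OF Y1]]) auto
  have "in_O (Suc n) (beta b m (Y + \<eta>) - beta b m Y)"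
    using beta_diff_in_O[OF Y1 in_O_add[OF Y1 \<eta>1], of "n - 1"] \<eta> n by simp
  then have \<rho>: "in_O (Suc n) \<rho>"
    unfolding \<rho>_def using n
    by (intro in_O_add in_O_mult_mono[OF \<xi> Y1] in_O_mult_mono[OF X \<eta>] in_O_mult_mono[OF \<xi> \<eta>]) auto
  have f': "immersion b m (X + \<xi>) (Y + \<eta>) (Z + \<zeta>) = (X + \<xi>, W + \<rho>, Z + \<zeta>)"
    by (simp add: immersion_def W_def \<rho>_def algebra_simps)
  have f\<delta>: "(X + \<xi>, W, Z + \<zeta>) = immersion b m X Y Z + (\<xi>, U * \<eta>, \<zeta>)"
    by (simp add: immersion_def W_def)
  have "first_form (X + \<xi>, W + \<rho>, Z + \<zeta>) - first_form (immersion b m X Y Z)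
      - linearized_first_form a20 a11 a02 \<xi> \<eta> \<zeta>
    = (first_form (X + \<xi>, W + \<rho>, Z + \<zeta>) - first_form (X + \<xi>, W, Z + \<zeta>))
      + (first_form (X + \<xi>, W, Z + \<zeta>) - first_form (immersion b m X Y Z)
      - linearized_first_form a20 a11 a02 \<xi> \<eta> \<zeta>)"
    by (simp add: algebra_simps)
  moreover have "in_O3 (n + 1) (first_form (X + \<xi>, W + \<rho>, Z + \<zeta>) - first_form (X + \<xi>, W, Z + \<zeta>))"
    using first_form_middle_perturb[OF W \<rho>] n by simp
  moreover have "in_O3 (n + 1) (first_form (X + \<xi>, W, Z + \<zeta>)
      - first_form (immersion b m X Y Z) - linearized_first_form a20 a11 a02 \<xi> \<eta> \<zeta>)"
    using first_form_perturb[OF immersion_near_quadric[OF X Y Z]] in_O_mono[OF \<xi>]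
      in_O_mult_mono[OF in_O_U \<eta>] \<zeta> n by (simp add: f\<delta> linearized_first_form_def)
  ultimately show ?thesis
    unfolding f' by (metis in_O3_add)
qed

lemma defect_after_correction:
  assumes X: "in_O 3 (X - U)" and Y: "in_O 2 (Y - V)" and Z: "in_O 3 (Z - Z2 a20 a11 a02)"
    and \<xi>: "in_O (n + 1) \<xi>" and \<eta>: "in_O (n - 1) \<eta>" and \<zeta>: "in_O n \<zeta>" and n: "3 \<le> n"
    and L: "in_O3 (n + 1) (linearized_first_form a20 a11 a02 \<xi> \<eta> \<zeta> - (M - first_form (immersion b m X Y Z)))"
  shows "in_O3 (n + 1) (M - first_form (immersion b m (X + \<xi>) (Y + \<eta>) (Z + \<zeta>)))"
proof -
  have "M - first_form (immersion b m (X + \<xi>) (Y + \<eta>) (Z + \<zeta>)) =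
      0 - (linearized_first_form a20 a11 a02 \<xi> \<eta> \<zeta> - (M - first_form (immersion b m X Y Z)))
      - (first_form (immersion b m (X + \<xi>) (Y + \<eta>) (Z + \<zeta>))
         - first_form (immersion b m X Y Z) - linearized_first_form a20 a11 a02 \<xi> \<eta> \<zeta>)"
    by (simp add: algebra_simps)
  then show ?thesis
    using in_O3_diff[OF in_O3_diff[OF in_O3_zero L] first_form_immersion_step[OF X Y Z \<xi> \<eta> \<zeta> n, of b m]]
    by simp
qed

lemma linearized_first_form_difference:
  assumes X: "in_O 3 (X - U)" and Y: "in_O 2 (Y - V)" and Z: "in_O 3 (Z - Z2 a20 a11 a02)"
    and dX: "in_O (k + 1) (X' - X)" and dY: "in_O (k - 1) (Y' - Y)" and dZ: "in_O k (Z' - Z)"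
    and k: "3 \<le> k"
    and R: "in_O3 (k + 1) (M - first_form (immersion b m X Y Z))"
    and R': "in_O3 (k + 1) (M - first_form (immersion b m X' Y' Z'))"
  shows "in_O3 (k + 1) (linearized_first_form a20 a11 a02 (X' - X) (Y' - Y) (Z' - Z))"
proof -
  let ?L = "linearized_first_form a20 a11 a02 (X' - X) (Y' - Y) (Z' - Z)"
  have "in_O3 (k + 1) (first_form (immersion b m X' Y' Z') - first_form (immersion b m X Y Z) - ?L)"
    using first_form_immersion_step[OF X Y Z dX dY dZ k, of b m] by simp
  moreover have "?L = (M - first_form (immersion b m X Y Z)) - (M - first_form (immersion b m X' Y' Z'))
      - (first_form (immersion b m X' Y' Z') - first_form (immersion b m X Y Z) - ?L)"
    by (simp add: algebra_simps)
  ultimately show ?thesis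
    using R R' by (metis in_O3_diff)
qed

section \<open>The linearised problem\<close>

text \<open>Unknowns: the coefficients x, y, z of the degree n + 1, n - 1, n terms of X, Y, Z,
  indexed by the power of v. Equations E and G are halved relative to the linearised first form.\<close>

context
  fixes a20 a11 a02 :: real
begin

definition eqnE :: "nat \<Rightarrow> (nat \<Rightarrow> real) \<Rightarrow> (nat \<Rightarrow> real) \<Rightarrow> (nat \<Rightarrow> real) \<Rightarrow> nat \<Rightarrow> real" where
  "eqnE n x y z l = (real n - real l + 1) * x l
     + (if l = 0 then 0 else (real n - real l + 1) * (y (l - 1) + a11 * z (l - 1)))
     + a20 * (real n - real l) * z l"

definition eqnF :: "nat \<Rightarrow> (nat \<Rightarrow> real) \<Rightarrow> (nat \<Rightarrow> real) \<Rightarrow> (nat \<Rightarrow> real) \<Rightarrow> nat \<Rightarrow> real" where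
  "eqnF n x y z l = (real l + 1) * x (l + 1) + real n * y l + a20 * (real l + 1) * z (l + 1)
     + a11 * real n * z l + (if l = 0 then 0 else a02 * (real n - real l + 1) * z (l - 1))"

definition eqnG :: "(nat \<Rightarrow> real) \<Rightarrow> (nat \<Rightarrow> real) \<Rightarrow> nat \<Rightarrow> real" where
  "eqnG y z l = (real l + 1) * y (l + 1) + a11 * (real l + 1) * z (l + 1) + a02 * real l * z l"

definition eqnH :: "nat \<Rightarrow> (nat \<Rightarrow> real) \<Rightarrow> (nat \<Rightarrow> real) \<Rightarrow> nat \<Rightarrow> real" where
  "eqnH n y z l = (real n - real l) * (real n - real l - 1) * y l + a20 * (real l + 1) * z (l + 1)
     + a11 * (real n - real l) * (real n - real l - 1) * z l
     + (if l = 0 then 0 else a02 * (real n - real l) * (real n - real l + 1) * z (l - 1))"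

lemma eqnH_eq: "eqnH n y z l = (real n - real l) * eqnF n x y z l - (real l + 1) * eqnE n x y z (l + 1)"
  unfolding eqnH_def eqnF_def eqnE_def by (simp add: algebra_simps)

text \<open>Eliminating y l between G (l - 1) and H l leaves a multiple of z (l - 1) whose factor
  (n - l) (n + l - 1) a02 does not vanish for 0 < l < n.\<close>

lemma eqnG_eqnH_eliminate:
  assumes "1 \<le> l"
  shows "a02 * (real n - real l) * (real n + real l - 1) * z (l - 1) =
    real l * (eqnH n y z l - a20 * (real l + 1) * z (l + 1) - a11 * (real n - real l) * (real n - real l - 1) * z l)
    - (real n - real l) * (real n - real l - 1) * (eqnG y z (l - 1) - a11 * real l * z l)"
  using assms by (simp add: eqnH_def eqnG_def of_nat_diff algebra_simps)

lemma eqn_homogeneous_z_zero: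
  assumes a02: "a02 > 0" and n: "n \<ge> 2"
    and z0: "\<forall>l>n. z l = 0" and y0: "\<forall>l\<ge>n. y l = 0"
    and G: "\<forall>l\<le>n. eqnG y z l = 0" and H: "\<forall>l<n. eqnH n y z l = 0"
  shows "z l = 0"
proof -
  have "z j = 0 \<and> z (Suc j) = 0" if "j \<le> n" for j
    using that
  proof (induction j rule: inc_induct)
    case base
    then show ?case using G[rule_format, of n] z0 y0 a02 n by (simp add: eqnG_def)
  next
    case (step j)
    then have zj: "z (Suc j) = 0" "z (Suc (Suc j)) = 0" by simp_all
    consider "Suc j = n" | "Suc j < n" using step.hyps by linarith
    then have "z j = 0"
    proof cases
      case 1
      then have "a02 * real j * z j = 0"
        using G[rule_format, of j] y0 zj by (simp add: eqnG_def)
      then show ?thesis using a02 n 1 by simp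
    next
      case 2
      have "a02 * (real n - real (Suc j)) * (real n + real (Suc j) - 1) * z j = 0"
        using eqnG_eqnH_eliminate[of "Suc j" n z y] H G zj 2 by simp
      then show ?thesis using a02 2 by simp
    qed
    then show ?case using zj by simp
  qed
  then show ?thesis using z0 by (cases "l \<le> n") auto
qed

lemma eqn_homogeneous_unique:
  assumes a02: "a02 > 0" and n: "n \<ge> 2"
    and z0: "\<forall>l>n. z l = 0" and y0: "\<forall>l\<ge>n. y l = 0"
    and E: "\<forall>l\<le>n. eqnE n x y z l = 0" and F: "\<forall>l\<le>n. eqnF n x y z l = 0"
    and G: "\<forall>l\<le>n. eqnG y z l = 0"
  shows "(\<forall>l\<le>n + 1. x l = 0) \<and> (\<forall>l. y l = 0) \<and> (\<forall>l. z l = 0)"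
proof -
  have H: "\<forall>l<n. eqnH n y z l = 0"
    using E F by (auto simp: eqnH_eq[of _ y z _ x])
  have z: "z l = 0" for l
    by (rule eqn_homogeneous_z_zero[OF a02 n z0 y0 G H])
  have y: "y j = 0" for j
  proof -
    consider "j = 0" | "0 < j" "j < n" | "n \<le> j" by linarith
    then show ?thesis
    proof cases
      case 1
      have "real n * (real n - 1) * y 0 = 0"
        using H[rule_format, of 0] n z by (simp add: eqnH_def)
      then show ?thesis using 1 n by simp
    next
      case 2
      then have "real j * y j = 0"
        using G[rule_format, of "j - 1"] z by (simp add: eqnG_def of_nat_diff)
      then show ?thesis using 2 by simp
    qed (use y0 in simp)
  qed
  have x: "x l = 0" if "l \<le> n + 1" for l
  proof (cases "l \<le> n")
    case True
    then have "(real n - real l + 1) * x l = 0"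
      using E[rule_format, of l] by (simp add: eqnE_def y z split: if_split_asm)
    then show ?thesis using True by simp
  next
    case False
    then have "(real n + 1) * x (n + 1) = 0"
      using F[rule_format, of n] by (simp add: eqnF_def y z split: if_split_asm)
    moreover have "l = n + 1" using False that by simp
    ultimately show ?thesis by (simp add: add_nonneg_eq_0_iff)
  qed
  show ?thesis using x y z by blast
qed

text \<open>Back substitution: z n and z (n - 1) come from G, then each pair (y l, z (l - 1)) from
  G (l - 1) and H l, for l = n - 1 down to 1; finally y 0 from H 0. Here z_back t is z (n - t).\<close>

fun z_back :: "nat \<Rightarrow> (nat \<Rightarrow> real) \<Rightarrow> (nat \<Rightarrow> real) \<Rightarrow> nat \<Rightarrow> real" where
  "z_back n g h 0 = g n / (a02 * real n)"
| "z_back n g h (Suc 0) = (g (n - 1) - a11 * real n * z_back n g h 0) / (a02 * (real n - 1))"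
| "z_back n g h (Suc (Suc t)) = (let j = n - 1 - t in
      (real j * (h j - a20 * (real j + 1) * z_back n g h t
                   - a11 * (real n - real j) * (real n - real j - 1) * z_back n g h (Suc t))
       - (real n - real j) * (real n - real j - 1) * (g (j - 1) - a11 * real j * z_back n g h (Suc t)))
      / (a02 * (real n - real j) * (real n + real j - 1)))"

lemma z_back_rec:
  assumes a02: "a02 > 0" and l: "1 \<le> l" "l < n"
  shows "a02 * (real n - real l) * (real n + real l - 1) * z_back n g h (n - (l - 1)) =
    real l * (h l - a20 * (real l + 1) * z_back n g h (n - (l + 1))
      - a11 * (real n - real l) * (real n - real l - 1) * z_back n g h (n - l))
    - (real n - real l) * (real n - real l - 1) * (g (l - 1) - a11 * real l * z_back n g h (n - l))"
proof -
  define t where "t = n - 1 - l"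
  have t: "n - (l - 1) = Suc (Suc t)" "n - l = Suc t" "n - (l + 1) = t" "n - 1 - t = l"
    using l by (auto simp: t_def)
  have "a02 * (real n - real l) * (real n + real l - 1) \<noteq> 0" using l a02 by auto
  then show ?thesis
    by (simp only: t z_back.simps Let_def) simp
qed

lemma eqnG_eqnH_solvable:
  assumes a02: "a02 > 0" and n: "n \<ge> 2"
  shows "\<exists>y z. (\<forall>l>n. z l = 0) \<and> (\<forall>l\<ge>n. y l = 0) \<and>
    (\<forall>l\<le>n. eqnG y z l = g l) \<and> (\<forall>l<n. eqnH n y z l = h l)"
proof -
  define z where "z l = (if l \<le> n then z_back n g h (n - l) else 0)" for l
  define y where "y j = (if j = 0 then (h 0 - a20 * z 1 - a11 * real n * (real n - 1) * z 0) / (real n * (real n - 1))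
     else if j < n then (g (j - 1) - a11 * real j * z j - a02 * (real j - 1) * z (j - 1)) / real j
     else 0)" for j
  have z_rec: "a02 * (real n - real l) * (real n + real l - 1) * z (l - 1) =
      real l * (h l - a20 * (real l + 1) * z (l + 1) - a11 * (real n - real l) * (real n - real l - 1) * z l)
      - (real n - real l) * (real n - real l - 1) * (g (l - 1) - a11 * real l * z l)"
    if "1 \<le> l" "l < n" for l
  proof -
    have "l - 1 \<le> n" "l \<le> n" "l + 1 \<le> n" using that by auto
    then show ?thesis using z_back_rec[OF a02 that, of g h] by (simp only: z_def if_True)
  qed
  have G: "eqnG y z l = g l" if l: "l \<le> n" for l
  proof -
    consider "l = n" | "l = n - 1" | "l + 2 \<le> n" using l by arith
    then show ?thesis
    proof cases
      case 1
      then show ?thesis using a02 n by (simp add: eqnG_def y_def z_def)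
    next
      case 2
      have "Suc (n - Suc 0) = n" "n - (n - Suc 0) = Suc 0" "real n - 1 \<noteq> 0" using n by auto
      then show ?thesis using 2 a02 n by (simp add: eqnG_def y_def z_def of_nat_diff field_simps)
    next
      case 3
      then show ?thesis by (simp add: eqnG_def y_def field_simps)
    qed
  qed
  have H: "eqnH n y z l = h l" if "l < n" for l
  proof (cases "l = 0")
    case True
    have "real n * (real n - 1) \<noteq> 0" using n by simp
    then show ?thesis using True n by (simp add: eqnH_def y_def field_simps)
  next
    case False
    then have "real l * (eqnH n y z l - h l) = 0"
      using eqnG_eqnH_eliminate[of l n z y] z_rec[of l] G[of "l - 1"] that by simp
    then show ?thesis using False by simp
  qed
  show ?thesis
    using G H n by (intro exI[of _ y] exI[of _ z]) (auto simp: y_def z_def)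
qed

lemma eqn_solvable:
  assumes a02: "a02 > 0" and n: "n \<ge> 2"
  shows "\<exists>x y z. (\<forall>l>n. z l = 0) \<and> (\<forall>l\<ge>n. y l = 0) \<and>
    (\<forall>l\<le>n. eqnE n x y z l = e l \<and> eqnF n x y z l = f l \<and> eqnG y z l = g l)"
proof -
  obtain y z where z0: "\<forall>l>n. z l = 0" and y0: "\<forall>l\<ge>n. y l = 0"
    and G: "\<forall>l\<le>n. eqnG y z l = g l"
    and H: "\<forall>l<n. eqnH n y z l = (real n - real l) * f l - (real l + 1) * e (l + 1)"
    using eqnG_eqnH_solvable[OF a02 n, of g "\<lambda>l. (real n - real l) * f l - (real l + 1) * e (l + 1)"]
    by blast
  define x where "x l = (if l \<le> n then (e l - (if l = 0 then 0 else (real n - real l + 1) * (y (l - 1) + a11 * z (l - 1)))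
      - a20 * (real n - real l) * z l) / (real n - real l + 1)
     else (f n - (real n * y n + a20 * (real n + 1) * z (n + 1) + a11 * real n * z n + a02 * z (n - 1))) / (real n + 1))" for l
  have E: "eqnE n x y z l = e l" if "l \<le> n" for l
  proof -
    have "real n - real l + 1 \<noteq> 0" using that by simp
    then show ?thesis using that unfolding eqnE_def x_def by (simp add: field_simps)
  qed
  have F: "eqnF n x y z l = f l" if "l \<le> n" for l
  proof (cases "l = n")
    case True
    have "real n + 1 \<noteq> 0" by simp
    then show ?thesis using True n unfolding eqnF_def x_def by (simp add: field_simps)
  next
    case False
    then have l: "l < n" using that by simp
    have "(real n - real l) * eqnF n x y z l = eqnH n y z l + (real l + 1) * eqnE n x y z (l + 1)"
      by (simp add: eqnH_eq[of n y z l x])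
    also have "\<dots> = (real n - real l) * f l" using H E[of "l + 1"] l by simp
    finally show ?thesis using l by simp
  qed
  show ?thesis using z0 y0 E F G by blast
qed

end

definition hcoeffs :: "nat \<Rightarrow> bfps \<Rightarrow> nat \<Rightarrow> real" where
  "hcoeffs d F l = (if l \<le> d then F $ (d - l) $ l else 0)"

definition homog :: "nat \<Rightarrow> (nat \<Rightarrow> real) \<Rightarrow> bfps" where
  "homog d x = Abs_fps (\<lambda>k. Abs_fps (\<lambda>l. if k + l = d then x l else 0))"

lemma homog_nth [simp]: "homog d x $ k $ l = (if k + l = d then x l else 0)"
  by (simp add: homog_def)

lemma in_O_homog: "in_O d (homog d x)"
  by (simp add: in_O_def)

lemma deg_le_homog: "deg_le d (homog d x)"
  by (simp add: deg_le_def)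

lemma hcoeffs_homog: "l \<le> d \<Longrightarrow> hcoeffs d (homog d x) l = x l"
  by (simp add: hcoeffs_def)

lemma hcoeffs_in_O: "in_O n F \<Longrightarrow> d < n \<Longrightarrow> hcoeffs d F l = 0"
  by (simp add: hcoeffs_def in_O_def)

lemma U_mult_row: "(U * F) $ k = (if k = 0 then 0 else F $ (k - 1))"
  by (cases k) (simp_all add: U_def)

lemma V_mult_row: "(V * F) $ k = fps_X * F $ k"
  by (simp add: V_def)

lemma bconst_mult_row: "(bconst c * F) $ k = fps_const c * F $ k"
  by (simp add: bconst_def)

lemma numeral_mult_row: "((numeral w :: bfps) * F) $ k = numeral w * F $ k"
  by (simp add: numeral_fps_const)

lemma numeral_mult_fps_nth: "((numeral w :: real fps) * f) $ k = numeral w * f $ k"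
  by (simp add: numeral_fps_const)

lemma if_nth: "(if P then f else g) $ n = (if P then f $ n else g $ n)"
  by simp

lemmas row_simps = if_nth fps_zero_nth U_mult_row V_mult_row bconst_mult_row numeral_mult_row
  numeral_mult_fps_nth Dv_nth_row fps_add_nth fps_X_mult_nth fps_mult_left_const_nth fps_deriv_nth
  of_nat_mult_fps_nth

lemma linearized_first_form_eq:
  "linearized_first_form a20 a11 a02 \<xi> \<eta> \<zeta> =
    (2 * (Du \<xi> + V * Du (U * \<eta>) + bconst a20 * (U * Du \<zeta>) + bconst a11 * (V * Du \<zeta>)),
     Dv \<xi> + V * Dv (U * \<eta>) + U * Du (U * \<eta>) + bconst a20 * (U * Dv \<zeta>) + bconst a11 * (V * Dv \<zeta>)
       + bconst a11 * (U * Du \<zeta>) + bconst a02 * (V * Du \<zeta>),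
     2 * (U * Dv (U * \<eta>) + bconst a11 * (U * Dv \<zeta>) + bconst a02 * (V * Dv \<zeta>)))"
  by (simp add: linearized_first_form_def first_form_deriv_def quadric_def Du_Z2 Dv_Z2 algebra_simps)

lemma linearized_first_form_E_nth:
  "fst (linearized_first_form a20 a11 a02 \<xi> \<eta> \<zeta>) $ k $ l =
    2 * eqnE a20 a11 (k + l) (hcoeffs (k + l + 1) \<xi>) (hcoeffs (k + l - 1) \<eta>) (hcoeffs (k + l) \<zeta>) l"
  unfolding linearized_first_form_eq eqnE_def hcoeffs_def fst_conv
  by (simp only: row_simps) (cases l; cases k; simp add: algebra_simps)

lemma linearized_first_form_F_nth:
  "fst (snd (linearized_first_form a20 a11 a02 \<xi> \<eta> \<zeta>)) $ k $ l =
    eqnF a20 a11 a02 (k + l) (hcoeffs (k + l + 1) \<xi>) (hcoeffs (k + l - 1) \<eta>) (hcoeffs (k + l) \<zeta>) l"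
  unfolding linearized_first_form_eq eqnF_def hcoeffs_def fst_conv snd_conv
  by (simp only: row_simps) (cases l; cases k; simp add: algebra_simps)

lemma linearized_first_form_G_nth:
  "snd (snd (linearized_first_form a20 a11 a02 \<xi> \<eta> \<zeta>)) $ k $ l =
    2 * eqnG a11 a02 (hcoeffs (k + l - 1) \<eta>) (hcoeffs (k + l) \<zeta>) l"
  unfolding linearized_first_form_eq eqnG_def hcoeffs_def snd_conv
  by (simp only: row_simps) (cases l; cases k; simp add: algebra_simps)

lemma linearized_first_form_in_O:
  assumes "in_O (n + 1) \<xi>" "in_O (n - 1) \<eta>" "in_O n \<zeta>" "2 \<le> n"
  shows "in_O3 n (linearized_first_form a20 a11 a02 \<xi> \<eta> \<zeta>)"
proof -
  have "hcoeffs (d + 1) \<xi> = (\<lambda>_. 0)" "hcoeffs (d - 1) \<eta> = (\<lambda>_. 0)" "hcoeffs d \<zeta> = (\<lambda>_. 0)"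
    if "d < n" for d
    using that assms by (auto intro!: hcoeffs_in_O)
  then show ?thesis
    by (simp add: in_O3_def in_O_def linearized_first_form_E_nth linearized_first_form_F_nth
        linearized_first_form_G_nth eqnE_def eqnF_def eqnG_def)
qed

lemma linearized_first_form_unique:
  assumes a02: "a02 > 0" and n: "n \<ge> 2"
    and \<xi>: "in_O (n + 1) \<xi>" and \<eta>: "in_O (n - 1) \<eta>" and \<zeta>: "in_O n \<zeta>"
    and L: "in_O3 (n + 1) (linearized_first_form a20 a11 a02 \<xi> \<eta> \<zeta>)"
  shows "in_O (n + 2) \<xi> \<and> in_O n \<eta> \<and> in_O (n + 1) \<zeta>"
proof -
  define x y z where "x = hcoeffs (n + 1) \<xi>" and "y = hcoeffs (n - 1) \<eta>" and "z = hcoeffs n \<zeta>"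
  have "eqnE a20 a11 n x y z l = 0 \<and> eqnF a20 a11 a02 n x y z l = 0 \<and> eqnG a11 a02 y z l = 0"
    if "l \<le> n" for l
  proof -
    have "fst (linearized_first_form a20 a11 a02 \<xi> \<eta> \<zeta>) $ (n - l) $ l = 0"
      "fst (snd (linearized_first_form a20 a11 a02 \<xi> \<eta> \<zeta>)) $ (n - l) $ l = 0"
      "snd (snd (linearized_first_form a20 a11 a02 \<xi> \<eta> \<zeta>)) $ (n - l) $ l = 0"
      using L that unfolding in_O3_def in_O_def by auto
    then show ?thesis
      using that by (simp add: linearized_first_form_E_nth linearized_first_form_F_nth
          linearized_first_form_G_nth x_def y_def z_def)
  qed
  moreover have "\<forall>l>n. z l = 0" "\<forall>l\<ge>n. y l = 0" using n by (auto simp: y_def z_def hcoeffs_def)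
  ultimately have x0: "\<forall>l\<le>n + 1. x l = 0" and y0: "\<forall>l. y l = 0" and z0: "\<forall>l. z l = 0"
    using eqn_homogeneous_unique[OF a02 n] by blast+
  have "in_O (Suc (n + 1)) \<xi>"
    unfolding in_O_Suc_iff using \<xi> x0 by (simp add: x_def hcoeffs_def)
  moreover have "in_O (Suc (n - 1)) \<eta>"
    unfolding in_O_Suc_iff
  proof (intro conjI allI impI \<eta>)
    fix l assume "l \<le> n - 1"
    then show "\<eta> $ (n - 1 - l) $ l = 0" using y0[rule_format, of l] by (simp add: y_def hcoeffs_def)
  qed
  moreover have "in_O (Suc n) \<zeta>"
    unfolding in_O_Suc_iff
  proof (intro conjI allI impI \<zeta>)
    fix l assume "l \<le> n"
    then show "\<zeta> $ (n - l) $ l = 0" using z0[rule_format, of l] by (simp add: z_def hcoeffs_def)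
  qed
  ultimately show ?thesis using n by simp
qed

lemma linearized_first_form_solvable:
  assumes a02: "a02 > 0" and n: "n \<ge> 2" and R: "in_O3 n R"
  shows "\<exists>\<xi> \<eta> \<zeta>. in_O (n + 1) \<xi> \<and> deg_le (n + 1) \<xi> \<and> in_O (n - 1) \<eta> \<and> deg_le (n - 1) \<eta>
     \<and> in_O n \<zeta> \<and> deg_le n \<zeta> \<and> in_O3 (n + 1) (linearized_first_form a20 a11 a02 \<xi> \<eta> \<zeta> - R)"
proof -
  obtain x y z where z0: "\<forall>l>n. z l = 0" and y0: "\<forall>l\<ge>n. y l = 0" and
    sol: "\<forall>l\<le>n. eqnE a20 a11 n x y z l = fst R $ (n - l) $ l / 2
       \<and> eqnF a20 a11 a02 n x y z l = fst (snd R) $ (n - l) $ l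
       \<and> eqnG a11 a02 y z l = snd (snd R) $ (n - l) $ l / 2"
    using eqn_solvable[OF a02 n, where e = "\<lambda>l. fst R $ (n - l) $ l / 2"
        and f = "\<lambda>l. fst (snd R) $ (n - l) $ l" and g = "\<lambda>l. snd (snd R) $ (n - l) $ l / 2"]
    by blast
  define \<xi> \<eta> \<zeta> where "\<xi> = homog (n + 1) x" and "\<eta> = homog (n - 1) y" and "\<zeta> = homog n z"
  have y: "hcoeffs (n - 1) \<eta> = y" and z: "hcoeffs n \<zeta> = z"
    using y0 z0 n by (auto simp: \<eta>_def \<zeta>_def hcoeffs_def fun_eq_iff)
  have x: "hcoeffs (n + 1) \<xi> l = x l" if "l \<le> n + 1" for l
    using that by (simp add: \<xi>_def hcoeffs_homog)
  have in_O: "in_O (n + 1) \<xi>" "in_O (n - 1) \<eta>" "in_O n \<zeta>"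
    by (simp_all add: \<xi>_def \<eta>_def \<zeta>_def in_O_homog)
  note L = linearized_first_form_in_O[OF in_O n, of a20 a11 a02]
  have "in_O (Suc n) (C (linearized_first_form a20 a11 a02 \<xi> \<eta> \<zeta> - R))"
    if C: "C \<in> {fst, \<lambda>p. fst (snd p), \<lambda>p. snd (snd p)}" for C
    unfolding in_O_Suc_iff
  proof (intro conjI allI impI)
    show "in_O n (C (linearized_first_form a20 a11 a02 \<xi> \<eta> \<zeta> - R))"
      using C L R by (auto simp: in_O3_def intro: in_O_diff)
    fix l assume l: "l \<le> n"
    show "C (linearized_first_form a20 a11 a02 \<xi> \<eta> \<zeta> - R) $ (n - l) $ l = 0"
      using C l sol x[of l] x[of "Suc l"]
      by (auto simp: linearized_first_form_E_nth linearized_first_form_F_nth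
          linearized_first_form_G_nth y[unfolded One_nat_def] z eqnE_def eqnF_def)
  qed
  from this[of fst] this[of "\<lambda>p. fst (snd p)"] this[of "\<lambda>p. snd (snd p)"]
  have "in_O3 (n + 1) (linearized_first_form a20 a11 a02 \<xi> \<eta> \<zeta> - R)"
    by (simp add: in_O3_def)
  then show ?thesis
    using in_O deg_le_homog unfolding \<xi>_def \<eta>_def \<zeta>_def by blast
qed

section \<open>The terms of degree at most two\<close>

lemma bconst_power2: "bconst (a ^ 2) = bconst a * bconst a"
  by (simp add: power2_eq_square)

lemma bconst_double_mult: "bconst (2 * a * b) = 2 * bconst a * bconst b"
  by (simp flip: bconst_numeral)

lemma first_form_quadric:
  "first_form (quadric a20 a11 a02) =
    (1 + bconst (a20 ^ 2) * (U * U) + bconst (2 * a20 * a11) * (U * V) + bconst (1 + a11 ^ 2) * (V * V),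
     bconst (a20 * a11) * (U * U) + bconst (a20 * a02 + a11 ^ 2 + 1) * (U * V) + bconst (a11 * a02) * (V * V),
     bconst (1 + a11 ^ 2) * (U * U) + bconst (2 * a11 * a02) * (U * V) + bconst (a02 ^ 2) * (V * V))"
  unfolding first_form_def quadric_def Du3_Pair Dv3_Pair dot3_Pair Du_Z2 Dv_Z2
    bconst_power2 bconst_double_mult bconst_add[symmetric] bconst_one[symmetric]
  by (simp add: algebra_simps)

lemma mult_nth_00: "(F * G :: bfps) $ 0 $ 0 = F$0$0 * G$0$0"
  by simp
lemma mult_nth_10: "(F * G :: bfps) $ 1 $ 0 = F$0$0 * G$1$0 + F$1$0 * G$0$0"
  by simp
lemma mult_nth_01: "(F * G :: bfps) $ 0 $ 1 = F$0$0 * G$0$1 + F$0$1 * G$0$0"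
  by simp
lemma mult_nth_20: "(F * G :: bfps) $ 2 $ 0 = F$0$0 * G$2$0 + F$1$0 * G$1$0 + F$2$0 * G$0$0"
  by (simp add: fps_mult_nth numeral_2_eq_2)
lemma mult_nth_11: "(F * G :: bfps) $ 1 $ 1 = F$0$0 * G$1$1 + F$1$0 * G$0$1 + F$0$1 * G$1$0 + F$1$1 * G$0$0"
  by (simp add: fps_mult_nth)
lemma mult_nth_02: "(F * G :: bfps) $ 0 $ 2 = F$0$0 * G$0$2 + F$0$1 * G$0$1 + F$0$2 * G$0$0"
  by (simp add: fps_mult_nth numeral_2_eq_2)

lemma in_O_3_coeffs:
  "in_O 3 F \<Longrightarrow> F$0$0 = 0 \<and> F$1$0 = 0 \<and> F$0$1 = 0 \<and> F$2$0 = 0 \<and> F$1$1 = 0 \<and> F$0$2 = 0"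
  by (simp add: in_O_def)

lemma first_form_degree_two_equations:
  assumes h: "in_O3 3 (first_form (quadric a20 a11 a02) - first_form (X, X * Y, Z))"
    and X: "in_O 2 (X - U)" and Y: "in_O 1 Y" and Z: "in_O 2 Z"
  shows "X$2$0 = 0" "X$1$1 = 0" "X$0$2 = 0"
    "6 * X$3$0 + 4 * X$2$0 * X$2$0 + 4 * Y$1$0 * Y$1$0 + 4 * Z$2$0 * Z$2$0 = a20^2"
    "4 * X$2$1 + 4 * X$1$1 * X$2$0 + 4 * Y$0$1 * Y$1$0 + 4 * Z$1$1 * Z$2$0 = 2 * a20 * a11"
    "2 * X$1$2 + X$1$1 * X$1$1 + Y$0$1 * Y$0$1 + Z$1$1 * Z$1$1 = 1 + a11^2"
    "X$2$1 + 2*X$2$0*X$1$1 + 2*Y$1$0*Y$0$1 + 2*Z$2$0*Z$1$1 = a20*a11"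
    "2*X$1$2 + 4*X$2$0*X$0$2 + X$1$1*X$1$1 + Y$0$1*Y$0$1 + 4*Z$2$0*Z$0$2 + Z$1$1*Z$1$1
       = a20*a02 + a11^2 + 1"
    "3*X$0$3 + 2*X$1$1*X$0$2 + 2*Z$1$1*Z$0$2 = a11*a02"
    "X$1$1*X$1$1 + Y$0$1*Y$0$1 + Z$1$1*Z$1$1 = 1 + a11^2"
    "4*X$1$1*X$0$2 + 4*Z$1$1*Z$0$2 = 2*a11*a02"
    "4*X$0$2*X$0$2 + 4*Z$0$2*Z$0$2 = a02^2"
proof -
  have x: "X$0$0 = 0" "X$1$0 = 1" "X$0$1 = 0"
    using X by (auto simp: in_O_def dest: spec[of _ 0] spec[of _ 1])
  have y: "Y$0$0 = 0" using Y by (simp add: in_O_def)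
  have z: "Z$0$0 = 0" "Z$1$0 = 0" "Z$0$1 = 0"
    using Z by (auto simp: in_O_def dest: spec[of _ 0] spec[of _ 1])
  note c0 = x y z
  note c = c0 c0[unfolded One_nat_def] c0[unfolded numeral_2_eq_2 One_nat_def]
  note ms0 = mult_nth_00 mult_nth_10 mult_nth_01 mult_nth_20 mult_nth_11 mult_nth_02
  note ms = ms0 ms0[unfolded One_nat_def] ms0[unfolded numeral_2_eq_2 One_nat_def]
  have w0: "(X * Y)$0$0 = 0" "(X * Y)$1$0 = 0" "(X * Y)$0$1 = 0" "(X * Y)$2$0 = Y$1$0"
    "(X * Y)$1$1 = Y$0$1" "(X * Y)$0$2 = 0"
    by (simp_all add: ms c del: fps_mult_nth_0 fps_mult_nth_1')
  note w = w0 w0[unfolded One_nat_def] w0[unfolded numeral_2_eq_2 One_nat_def]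
  note hE = in_O_3_coeffs[OF conjunct1[OF h[unfolded first_form_quadric in_O3_def]]]
    and hF = in_O_3_coeffs[OF conjunct1[OF conjunct2[OF h[unfolded first_form_quadric in_O3_def]]]]
    and hG = in_O_3_coeffs[OF conjunct2[OF conjunct2[OF h[unfolded first_form_quadric in_O3_def]]]]
  note simps = first_form_def ms c w numeral_mult_fps_nth
    numeral_2_eq_2 numeral_3_eq_3 One_nat_def
  show "X$2$0 = 0" "X$1$1 = 0"
    "6 * X$3$0 + 4 * X$2$0 * X$2$0 + 4 * Y$1$0 * Y$1$0 + 4 * Z$2$0 * Z$2$0 = a20^2"
    "4 * X$2$1 + 4 * X$1$1 * X$2$0 + 4 * Y$0$1 * Y$1$0 + 4 * Z$1$1 * Z$2$0 = 2 * a20 * a11"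
    "2 * X$1$2 + X$1$1 * X$1$1 + Y$0$1 * Y$0$1 + Z$1$1 * Z$1$1 = 1 + a11^2"
    using hE by (simp_all add: simps del: fps_mult_nth_0 fps_mult_nth_1')
  show "X$0$2 = 0"
    "X$2$1 + 2*X$2$0*X$1$1 + 2*Y$1$0*Y$0$1 + 2*Z$2$0*Z$1$1 = a20*a11"
    "2*X$1$2 + 4*X$2$0*X$0$2 + X$1$1*X$1$1 + Y$0$1*Y$0$1 + 4*Z$2$0*Z$0$2 + Z$1$1*Z$1$1
       = a20*a02 + a11^2 + 1"
    "3*X$0$3 + 2*X$1$1*X$0$2 + 2*Z$1$1*Z$0$2 = a11*a02"
    using hF by (simp_all add: simps del: fps_mult_nth_0 fps_mult_nth_1')
  show "X$1$1*X$1$1 + Y$0$1*Y$0$1 + Z$1$1*Z$1$1 = 1 + a11^2"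
    "4*X$1$1*X$0$2 + 4*Z$1$1*Z$0$2 = 2*a11*a02"
    "4*X$0$2*X$0$2 + 4*Z$0$2*Z$0$2 = a02^2"
    using hG by (simp_all add: simps del: fps_mult_nth_0 fps_mult_nth_1')
qed

lemma pairs_below_2: "k + l < (2::nat) \<Longrightarrow> (k = 0 \<and> l = 0) \<or> (k = 1 \<and> l = 0) \<or> (k = 0 \<and> l = 1)"
  by presburger

lemma pairs_below_3: "k + l < (3::nat) \<Longrightarrow> (k = 0 \<and> l = 0) \<or> (k = 1 \<and> l = 0) \<or> (k = 0 \<and> l = 1) \<or>
  (k = 2 \<and> l = 0) \<or> (k = 1 \<and> l = 1) \<or> (k = 0 \<and> l = 2)"
  by presburger

lemma pairs_below_4: "k + l < (4::nat) \<Longrightarrow> (k = 0 \<and> l = 0) \<or> (k = 1 \<and> l = 0) \<or> (k = 0 \<and> l = 1) \<or>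
  (k = 2 \<and> l = 0) \<or> (k = 1 \<and> l = 1) \<or> (k = 0 \<and> l = 2) \<or>
  (k = 3 \<and> l = 0) \<or> (k = 2 \<and> l = 1) \<or> (k = 1 \<and> l = 2) \<or> (k = 0 \<and> l = 3)"
  by presburger

lemma degree_two_unique:
  assumes a02: "a02 > 0"
    and h: "in_O3 3 (first_form (quadric a20 a11 a02) - first_form (X, X * Y, Z))"
    and X: "in_O 2 (X - U)" and Y: "in_O 1 Y" and Z: "in_O 2 Z"
    and y01: "Y$0$1 > 0" and z02: "Z$0$2 > 0"
  shows "in_O 4 (X - U) \<and> in_O 2 (Y - V) \<and> in_O 3 (Z - Z2 a20 a11 a02)"
proof -
  note eqs = first_form_degree_two_equations[OF h X Y Z]
  have z02v: "Z$0$2 = a02 / 2"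
  proof -
    have "(2 * Z$0$2 - a02) * (2 * Z$0$2 + a02) = 0"
      using eqs(12) eqs(3) by (simp add: algebra_simps power2_eq_square)
    moreover have "2 * Z$0$2 + a02 > 0" using z02 a02 by simp
    ultimately show ?thesis by simp
  qed
  have z11v: "Z$1$1 = a11" using eqs(11) eqs(2) z02v a02 by (simp add: algebra_simps)
  have y01v: "Y$0$1 = 1"
  proof -
    have "(Y$0$1 - 1) * (Y$0$1 + 1) = 0"
      using eqs(10) eqs(2) z11v by (simp add: algebra_simps power2_eq_square)
    moreover have "Y$0$1 + 1 > 0" using y01 by simp
    ultimately show ?thesis by simp
  qed
  have x12v: "X$1$2 = 0" using eqs(6) eqs(2) y01v z11v by (simp add: power2_eq_square)
  have z20v: "Z$2$0 = a20 / 2"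
  proof -
    have "2 * a02 * Z$2$0 = a20 * a02"
      using eqs(8) x12v eqs(1) eqs(2) y01v z11v z02v by (simp add: algebra_simps power2_eq_square)
    then show ?thesis using a02 by (simp add: field_simps)
  qed
  have x03v: "X$0$3 = 0" using eqs(9) eqs(2) z11v z02v by simp
  have y10v: "Y$1$0 = 0" and x21v: "X$2$1 = 0"
    using eqs(7) eqs(5) eqs(1) eqs(2) y01v z11v z20v by (simp_all add: algebra_simps)
  have x30v: "X$3$0 = 0" using eqs(4) eqs(1) y10v z20v by (simp add: power2_eq_square)
  have x: "X$0$0 = 0" "X$1$0 = 1" "X$0$1 = 0" and y00: "Y$0$0 = 0"
    and z: "Z$0$0 = 0" "Z$1$0 = 0" "Z$0$1 = 0"
    using X Y Z by (auto simp: in_O_def dest: spec[of _ 0] spec[of _ 1])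
  have "(X - U) $ k $ l = 0" if "k + l < 4" for k l
    using pairs_below_4[OF that] x eqs(1-3) x30v x21v x12v x03v by auto
  moreover have "(Y - V) $ k $ l = 0" if "k + l < 2" for k l
    using pairs_below_2[OF that] y00 y10v y01v by auto
  moreover have "(Z - Z2 a20 a11 a02) $ k $ l = 0" if "k + l < 3" for k l
    using pairs_below_3[OF that] z z20v z11v z02v by (auto simp: Z2_nth)
  ultimately show ?thesis by (simp add: in_O_def)
qed

lemma first_form_immersion_drop_beta:
  assumes "in_O 1 X" "in_O 1 Y"
  shows "in_O3 3 (first_form (immersion b m X Y Z) - first_form (X, X * Y, Z))"
proof -
  have "in_O 2 (X * Y)" using in_O_mult[OF assms] by (simp add: numeral_2_eq_2)
  moreover have "in_O (Suc 2) (beta b m Y)" using in_O_beta[OF assms(2)] by simp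
  ultimately show ?thesis
    using first_form_middle_perturb[of "X * Y" 2 "beta b m Y" X Z] by (simp add: immersion_def)
qed

section \<open>Solutions order by order\<close>

locale normal_metric =
  fixes a20 a11 a02 :: real and M :: bfps3 and b :: "nat \<Rightarrow> real" and m :: nat
  assumes a02_pos: "0 < a02"
    and M_normal: "in_O3 3 (M - first_form (quadric a20 a11 a02))"
begin

text \<open>The low-order terms are pinned to the quadric from the start; by solution_iff below
  this is what the positivity conditions of a formal solution amount to.\<close>

definition solution :: "nat \<Rightarrow> bfps \<Rightarrow> bfps \<Rightarrow> bfps \<Rightarrow> bool" where
  "solution n X Y Z \<longleftrightarrow>
     in_O 4 (X - U) \<and> in_O 2 (Y - V) \<and> in_O 3 (Z - Z2 a20 a11 a02) \<and>
     deg_le (n + 1) (X - U) \<and> deg_le (n - 1) Y \<and> deg_le n Z \<and>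
     in_O3 (n + 1) (M - first_form (immersion b m X Y Z))"

lemma solution_2: "solution 2 U V (Z2 a20 a11 a02)"
proof -
  have "in_O3 3 (first_form (immersion b m U V (Z2 a20 a11 a02)) - first_form (quadric a20 a11 a02))"
    using first_form_immersion_drop_beta[OF in_O_U in_O_V] by (simp add: quadric_def)
  then have "in_O3 3 (M - first_form (immersion b m U V (Z2 a20 a11 a02)))"
    using in_O3_diff[OF M_normal] by fastforce
  then show ?thesis
    by (simp add: solution_def deg_le_def Z2_nth numeral_3_eq_3)
qed

lemma solution_Suc:
  assumes n: "2 \<le> n" and sol: "solution n X Y Z"
  shows "\<exists>X' Y' Z'. solution (n + 1) X' Y' Z'"
proof -
  have X: "in_O 4 (X - U)" and Y: "in_O 2 (Y - V)" and Z: "in_O 3 (Z - Z2 a20 a11 a02)"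
    and dX: "deg_le (n + 1) (X - U)" and dY: "deg_le (n - 1) Y" and dZ: "deg_le n Z"
    and R: "in_O3 (n + 1) (M - first_form (immersion b m X Y Z))"
    using sol by (simp_all add: solution_def)
  obtain \<xi> \<eta> \<zeta> where \<xi>: "in_O (n + 2) \<xi>" "deg_le (n + 2) \<xi>"
    and \<eta>: "in_O n \<eta>" "deg_le n \<eta>" and \<zeta>: "in_O (n + 1) \<zeta>" "deg_le (n + 1) \<zeta>"
    and L: "in_O3 (n + 2) (linearized_first_form a20 a11 a02 \<xi> \<eta> \<zeta> - (M - first_form (immersion b m X Y Z)))"
    using linearized_first_form_solvable[OF a02_pos _ R, of a20 a11] n by auto
  have "in_O3 (n + 2) (M - first_form (immersion b m (X + \<xi>) (Y + \<eta>) (Z + \<zeta>)))"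
    using defect_after_correction[OF in_O_mono[OF X] Y Z, of "n + 1" \<xi> \<eta> \<zeta>] \<xi> \<eta> \<zeta> L n by simp
  moreover have "in_O 4 (X + \<xi> - U)" "in_O 2 (Y + \<eta> - V)" "in_O 3 (Z + \<zeta> - Z2 a20 a11 a02)"
    using in_O_add[OF X in_O_mono[OF \<xi>(1)]] in_O_add[OF Y in_O_mono[OF \<eta>(1)]]
      in_O_add[OF Z in_O_mono[OF \<zeta>(1)]] n
    by (simp_all add: algebra_simps)
  moreover have "deg_le (n + 2) (X + \<xi> - U)" "deg_le n (Y + \<eta>)" "deg_le (n + 1) (Z + \<zeta>)"
    using deg_le_add[OF deg_le_mono[OF dX] \<xi>(2)] deg_le_add[OF deg_le_mono[OF dY] \<eta>(2)]
      deg_le_add[OF deg_le_mono[OF dZ] \<zeta>(2)]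
    by (simp_all add: algebra_simps)
  ultimately have "solution (n + 1) (X + \<xi>) (Y + \<eta>) (Z + \<zeta>)"
    by (simp add: solution_def)
  then show ?thesis by blast
qed

lemma solution_exists: "2 \<le> n \<Longrightarrow> \<exists>X Y Z. solution n X Y Z"
proof (induction n rule: dec_induct)
  case base
  then show ?case using solution_2 by blast
next
  case (step n)
  then show ?case using solution_Suc by (metis Suc_eq_plus1)
qed

text \<open>Two solutions of order n agree to one order more at each step, since their difference
  is annihilated by the linearised first form; the degree bounds then force equality.\<close>

lemma solutions_agree_to_order:
  assumes sol: "solution n X Y Z" and sol': "solution n X' Y' Z'"
    and k: "3 \<le> k" "k \<le> n + 1"
  shows "in_O (k + 1) (X' - X) \<and> in_O (k - 1) (Y' - Y) \<and> in_O k (Z' - Z)"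
  using k
proof (induction k rule: dec_induct)
  case base
  have "in_O 4 (X' - U)" "in_O 4 (X - U)" "in_O 2 (Y' - V)" "in_O 2 (Y - V)"
    "in_O 3 (Z' - Z2 a20 a11 a02)" "in_O 3 (Z - Z2 a20 a11 a02)"
    using sol sol' by (simp_all add: solution_def)
  from in_O_diff[OF this(1,2)] in_O_diff[OF this(3,4)] in_O_diff[OF this(5,6)]
  show ?case by simp
next
  case (step k)
  then have IH: "in_O (k + 1) (X' - X)" "in_O (k - 1) (Y' - Y)" "in_O k (Z' - Z)" by simp_all
  have X: "in_O 3 (X - U)" and Y: "in_O 2 (Y - V)" and Z: "in_O 3 (Z - Z2 a20 a11 a02)"
    using sol by (auto simp: solution_def intro: in_O_mono)
  have "in_O3 (k + 1) (M - first_form (immersion b m X Y Z))"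
    "in_O3 (k + 1) (M - first_form (immersion b m X' Y' Z'))"
    using sol sol' step.hyps(2) k(2) by (auto simp: solution_def intro: in_O3_mono)
  then have "in_O3 (k + 1) (linearized_first_form a20 a11 a02 (X' - X) (Y' - Y) (Z' - Z))"
    using linearized_first_form_difference[OF X Y Z IH step.hyps(1)] by blast
  then show ?case
    using linearized_first_form_unique[OF a02_pos _ IH] step.hyps(1) by simp
qed

lemma solution_unique:
  assumes n: "2 \<le> n" and sol: "solution n X Y Z" and sol': "solution n X' Y' Z'"
  shows "X' = X \<and> Y' = Y \<and> Z' = Z"
proof -
  have "in_O (Suc (n + 1)) (X' - X)" "in_O (Suc (n - 1)) (Y' - Y)" "in_O (Suc n) (Z' - Z)"
    using solutions_agree_to_order[OF sol sol', of "n + 1"] n by simp_all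
  moreover have "deg_le (n + 1) (X' - X)" "deg_le (n - 1) (Y' - Y)" "deg_le n (Z' - Z)"
    using deg_le_diff[of "n + 1" "X' - U" "X - U"] deg_le_diff[of "n - 1" Y' Y] deg_le_diff[of n Z' Z]
      sol sol' by (simp_all add: solution_def)
  ultimately have "X' - X = 0" "Y' - Y = 0" "Z' - Z = 0"
    using in_O_deg_le_zero by blast+
  then show ?thesis by simp
qed

lemma solution_iff:
  assumes n: "2 \<le> n"
  shows "solution n X Y Z \<longleftrightarrow>
    in_O 2 (X - U) \<and> deg_le (n + 1) (X - U) \<and> in_O 1 Y \<and> deg_le (n - 1) Y \<and>
    in_O 2 Z \<and> deg_le n Z \<and> Y $ 0 $ 1 > 0 \<and> Z $ 0 $ 2 > 0 \<and>
    in_O3 (n + 1) (M - first_form (immersion b m X Y Z))"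
    (is "_ \<longleftrightarrow> ?low \<and> ?R")
proof
  assume sol: "solution n X Y Z"
  then have Y: "in_O 2 (Y - V)" and Z: "in_O 3 (Z - Z2 a20 a11 a02)"
    by (simp_all add: solution_def)
  have "in_O 1 ((Y - V) + V)" "in_O 2 ((Z - Z2 a20 a11 a02) + Z2 a20 a11 a02)"
    using in_O_add[OF in_O_mono[OF Y] in_O_V] in_O_add[OF in_O_mono[OF Z] in_O_Z2[of a20 a11 a02]] by simp_all
  moreover have "Y $ 0 $ 1 = 1" "Z $ 0 $ 2 = a02 / 2"
    using Y Z by (auto simp: in_O_def Z2_nth dest!: spec[of _ 0] spec[of _ 1] spec[of _ 2])
  ultimately show "?low \<and> ?R"
    using sol a02_pos by (auto simp: solution_def intro: in_O_mono)
next
  assume h: "?low \<and> ?R"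
  then have X: "in_O 2 (X - U)" and Y: "in_O 1 Y" and Z: "in_O 2 Z"
    and R: "in_O3 3 (M - first_form (immersion b m X Y Z))"
    using n by (auto intro: in_O3_mono)
  have X1: "in_O 1 X" using in_O_add[OF in_O_mono[OF X] in_O_U] by simp
  have "first_form (quadric a20 a11 a02) - first_form (X, X * Y, Z) =
      (M - first_form (immersion b m X Y Z)) - (M - first_form (quadric a20 a11 a02))
      + (first_form (immersion b m X Y Z) - first_form (X, X * Y, Z))"
    by (simp add: algebra_simps)
  then have "in_O3 3 (first_form (quadric a20 a11 a02) - first_form (X, X * Y, Z))"
    using in_O3_add[OF in_O3_diff[OF R M_normal] first_form_immersion_drop_beta[OF X1 Y, where b = b and m = m and Z = Z]]
    by simp
  then show "solution n X Y Z"
    using degree_two_unique[OF a02_pos _ X Y Z] h by (simp add: solution_def)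
qed

end

section \<open>Translation from factorial-normalised coefficients\<close>

definition bfps_of :: "fps2 \<Rightarrow> bfps" where
  "bfps_of P = Abs_fps (\<lambda>k. Abs_fps (\<lambda>l. P k l / (fact k * fact l)))"

definition fps2_of :: "bfps \<Rightarrow> fps2" where
  "fps2_of F = (\<lambda>k l. fact k * fact l * F $ k $ l)"

lemma bfps_of_nth [simp]: "bfps_of P $ k $ l = P k l / (fact k * fact l)"
  by (simp add: bfps_of_def)

lemma bfps_of_fps2_of [simp]: "bfps_of (fps2_of F) = F"
  by (intro fps_ext) (simp add: fps2_of_def)

lemma bfps_of_inject: "bfps_of P = bfps_of Q \<longleftrightarrow> P = Q"
proof
  assume "bfps_of P = bfps_of Q"
  then have "bfps_of P $ k $ l = bfps_of Q $ k $ l" for k l by simp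
  then show "P = Q" by (intro ext) (simp add: field_simps)
qed simp

lemma bfps_of_add: "bfps_of (fps2_add P Q) = bfps_of P + bfps_of Q"
  by (intro fps_ext) (simp add: fps2_add_def add_divide_distrib)

lemma bfps_of_diff: "bfps_of (fps2_diff P Q) = bfps_of P - bfps_of Q"
  by (intro fps_ext) (simp add: fps2_diff_def diff_divide_distrib)

lemma bfps_of_scale: "bfps_of (fps2_scale c P) = bconst c * bfps_of P"
  by (intro fps_ext) (simp add: fps2_scale_def bconst_def)

lemma bfps_of_const: "bfps_of (fps2_const c) = bconst c"
  by (intro fps_ext) (simp add: fps2_const_def)

lemma bfps_of_mult: "bfps_of (fps2_mult P Q) = bfps_of P * bfps_of Q"
proof (intro fps_ext)
  fix k l
  have "(bfps_of P * bfps_of Q) $ k $ l =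
      (\<Sum>i=0..k. \<Sum>j=0..l. bfps_of P $ i $ j * bfps_of Q $ (k - i) $ (l - j))"
    by (simp add: fps_mult_nth fps_sum_nth)
  also have "\<dots> = (\<Sum>i=0..k. \<Sum>j=0..l.
      of_nat (k choose i) * of_nat (l choose j) * P i j * Q (k - i) (l - j) / (fact k * fact l))"
    by (intro sum.cong refl) (simp add: binomial_fact field_simps)
  also have "\<dots> = bfps_of (fps2_mult P Q) $ k $ l"
    by (simp add: fps2_mult_def sum_divide_distrib atLeast0AtMost)
  finally show "bfps_of (fps2_mult P Q) $ k $ l = (bfps_of P * bfps_of Q) $ k $ l" ..
qed

lemma bfps_of_pow: "bfps_of (fps2_pow P n) = bfps_of P ^ n"
  by (induction n) (simp_all add: bfps_of_const bfps_of_mult bconst_def)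

lemma fact_Suc_divide: "real (Suc k) * x / (fact (Suc k) * y) = x / (fact k * (y :: real))"
  by (simp add: fact_Suc del: of_nat_Suc)

lemma bfps_of_du: "bfps_of (fps2_du P) = Du (bfps_of P)"
  by (intro fps_ext) (simp add: fps2_du_def fact_Suc_divide del: of_nat_Suc of_nat_add)

lemma bfps_of_dv: "bfps_of (fps2_dv P) = Dv (bfps_of P)"
  by (intro fps_ext)
    (simp add: fps2_dv_def fact_Suc_divide[of l _ "fact k"] mult.commute del: of_nat_Suc of_nat_add)

lemma bfps_of_beta: "bfps_of (beta_comp b m Y) = beta b m (bfps_of Y)"
proof (intro fps_ext)
  fix k l
  have sum_nth: "(sum f J :: bfps) $ k $ l = (\<Sum>j\<in>J. f j $ k $ l)" for f J
    by (simp add: fps_sum_nth)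
  show "bfps_of (beta_comp b m Y) $ k $ l = beta b m (bfps_of Y) $ k $ l"
    unfolding bfps_of_nth beta_comp_def beta_def sum_nth bconst_mult_nth sum_divide_distrib
    by (intro sum.cong refl) (simp add: bfps_of_pow[symmetric])
qed

lemma fps2_order_ge_iff: "fps2_order_ge n P \<longleftrightarrow> in_O n (bfps_of P)"
  by (simp add: fps2_order_ge_def in_O_def)

lemma bfps_of_monom_20: "bfps_of (fps2_monom 2 0) = U * U"
  and bfps_of_monom_11: "bfps_of (fps2_monom 1 1) = U * V"
  and bfps_of_monom_02: "bfps_of (fps2_monom 0 2) = V * V"
  by (intro fps_ext; simp add: fps2_monom_def)+

lemma normalized_EFG_in_O3:
  assumes "normalized_EFG a20 a11 a02 E F G"
  shows "in_O3 3 ((bfps_of E, bfps_of F, bfps_of G) - first_form (quadric a20 a11 a02))"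
  using assms
  unfolding normalized_EFG_def fps2_order_ge_iff first_form_quadric
  by (simp add: bfps_of_diff bfps_of_add bfps_of_scale bfps_of_const bfps_of_monom_20
      bfps_of_monom_11[unfolded One_nat_def] bfps_of_monom_02)

lemma formal_solution_iff:
  "formal_solution E F G b m X Y Z \<longleftrightarrow>
    in_O 2 (bfps_of X - U) \<and> deg_le (m + 1) (bfps_of X - U) \<and>
    in_O 1 (bfps_of Y) \<and> deg_le (m - 1) (bfps_of Y) \<and>
    in_O 2 (bfps_of Z) \<and> deg_le m (bfps_of Z) \<and>
    bfps_of Y $ 0 $ 1 > 0 \<and> bfps_of Z $ 0 $ 2 > 0 \<and>
    in_O3 (m + 1) ((bfps_of E, bfps_of F, bfps_of G)
      - first_form (immersion b m (bfps_of X) (bfps_of Y) (bfps_of Z)))"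
proof -
  have fact_pos: "fact k * fact l > (0 :: real)" for k l by simp
  have x: "(bfps_of X - U) $ k $ l = 0 \<longleftrightarrow> X k l = (if k = 1 \<and> l = 0 then 1 else 0)"
    and y: "bfps_of Y $ k $ l = 0 \<longleftrightarrow> Y k l = 0" and z: "bfps_of Z $ k $ l = 0 \<longleftrightarrow> Z k l = 0"
    for k l
    using fact_pos[of k l] by (auto simp: field_simps)
  have coeffs:
    "(\<forall>k l. (k + l < 2 \<or> m + 1 < k + l) \<longrightarrow> X k l = (if k = 1 \<and> l = 0 then 1 else 0)) \<longleftrightarrow>
       in_O 2 (bfps_of X - U) \<and> deg_le (m + 1) (bfps_of X - U)"
    "(\<forall>k l. (k + l < 1 \<or> m - 1 < k + l) \<longrightarrow> Y k l = 0) \<longleftrightarrow>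
       in_O 1 (bfps_of Y) \<and> deg_le (m - 1) (bfps_of Y)"
    "(\<forall>k l. (k + l < 2 \<or> m < k + l) \<longrightarrow> Z k l = 0) \<longleftrightarrow> in_O 2 (bfps_of Z) \<and> deg_le m (bfps_of Z)"
    unfolding in_O_def deg_le_def x y z by blast+
  define f where "f = immersion b m (bfps_of X) (bfps_of Y) (bfps_of Z)"
  define mid where "mid = fps2_add (fps2_mult X Y) (beta_comp b m Y)"
  have "Du3 f = (bfps_of (fps2_du X), bfps_of (fps2_du mid), bfps_of (fps2_du Z))"
    and "Dv3 f = (bfps_of (fps2_dv X), bfps_of (fps2_dv mid), bfps_of (fps2_dv Z))"
    by (simp_all add: f_def mid_def immersion_def bfps_of_du bfps_of_dv bfps_of_add bfps_of_mult
        bfps_of_beta)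
  then have "(let f = (X, mid, Z);
          fu = (case f of (f1, f2, f3) \<Rightarrow> (fps2_du f1, fps2_du f2, fps2_du f3));
          fv = (case f of (f1, f2, f3) \<Rightarrow> (fps2_dv f1, fps2_dv f2, fps2_dv f3))
      in fps2_order_ge (m + 1) (fps2_diff E (fps2_dot fu fu)) \<and>
         fps2_order_ge (m + 1) (fps2_diff F (fps2_dot fu fv)) \<and>
         fps2_order_ge (m + 1) (fps2_diff G (fps2_dot fv fv))) \<longleftrightarrow>
      in_O3 (m + 1) ((bfps_of E, bfps_of F, bfps_of G) - first_form f)"
    unfolding Let_def prod.case fps2_order_ge_iff in_O3_def first_form_def
    by (simp add: fps2_dot_def bfps_of_diff bfps_of_add bfps_of_mult)
  then show ?thesis
    unfolding formal_solution_def coeffs f_def mid_def by simp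
qed

theorem mainTheorem5:
  fixes a20 a11 a02 :: real and E F G :: fps2 and b :: "nat \<Rightarrow> real" and m :: nat
  assumes "a02 > 0"
    and "normalized_EFG a20 a11 a02 E F G"
    and "m \<ge> 2"
  shows "\<exists>!(X, Y, Z). formal_solution E F G b m X Y Z"
proof -
  interpret normal_metric a20 a11 a02 "(bfps_of E, bfps_of F, bfps_of G)" b m
    using assms(1) normalized_EFG_in_O3[OF assms(2)] by unfold_locales
  have sol: "formal_solution E F G b m X Y Z \<longleftrightarrow> solution m (bfps_of X) (bfps_of Y) (bfps_of Z)"
    for X Y Z
    by (simp add: formal_solution_iff solution_iff[OF assms(3)])
  obtain X Y Z where XYZ: "solution m X Y Z"
    using solution_exists[OF assms(3)] by blast
  show ?thesis
  proof (rule ex1I[of _ "(fps2_of X, fps2_of Y, fps2_of Z)"])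
    show "case (fps2_of X, fps2_of Y, fps2_of Z) of (X, Y, Z) \<Rightarrow> formal_solution E F G b m X Y Z"
      using XYZ by (simp add: sol)
  next
    fix p assume "case p of (X, Y, Z) \<Rightarrow> formal_solution E F G b m X Y Z"
    then obtain X' Y' Z' where p: "p = (X', Y', Z')" and "solution m (bfps_of X') (bfps_of Y') (bfps_of Z')"
      by (cases p) (simp add: sol)
    then have "bfps_of X' = X \<and> bfps_of Y' = Y \<and> bfps_of Z' = Z"
      using solution_unique[OF assms(3) XYZ] by blast
    then show "p = (fps2_of X, fps2_of Y, fps2_of Z)"
      unfolding p by (metis bfps_of_fps2_of bfps_of_inject)
  qed
qed

end
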